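(* The ai-semiring $S_{(4,435)}$ is nonfinitely based.
   Context: An ai-semiring is an algebra $(S,+,\cdot)$ with $(S,+)$ a semilattice, $(S,\cdot)$ a semigroup, and both distributive laws. An algebra is finitely based if some finite set of identities derives all its identities. $S_{(4,435)}$ has carrier $\{1,2,3,4\}$; addition: $x+x=x$, $2+x=x$, $1+x=1$ for all $x$, $3+4=1$; multiplication (row $a$, column $b$ gives $a\cdot b$): row $1$: $1,2,1,1$; row $2$: $2,2,2,2$; row $3$: $1,2,1,3$; row $4$: $1,2,3,4$. *)

theory Defs
  imports Main
begin

datatype trm = Var nat | Plus trm trm | Times trm trm

fun eval :: "('a \<Rightarrow> 'a \<Rightarrow> 'a) \<Rightarrow> ('a \<Rightarrow> 'a \<Rightarrow> 'a) \<Rightarrow> (nat \<Rightarrow> 'a) \<Rightarrow> trm \<Rightarrow> 'a" where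
  "eval pl tm v (Var n) = v n"
| "eval pl tm v (Plus s t) = pl (eval pl tm v s) (eval pl tm v t)"
| "eval pl tm v (Times s t) = tm (eval pl tm v s) (eval pl tm v t)"

definition satisfies :: "('a \<Rightarrow> 'a \<Rightarrow> 'a) \<Rightarrow> ('a \<Rightarrow> 'a \<Rightarrow> 'a) \<Rightarrow> trm \<times> trm \<Rightarrow> bool" where
  "satisfies pl tm e \<longleftrightarrow> (\<forall>v. eval pl tm v (fst e) = eval pl tm v (snd e))"

definition identities :: "('a \<Rightarrow> 'a \<Rightarrow> 'a) \<Rightarrow> ('a \<Rightarrow> 'a \<Rightarrow> 'a) \<Rightarrow> (trm \<times> trm) set" where
  "identities pl tm = {e. satisfies pl tm e}"

fun subst :: "(nat \<Rightarrow> trm) \<Rightarrow> trm \<Rightarrow> trm" where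
  "subst \<sigma> (Var n) = \<sigma> n"
| "subst \<sigma> (Plus s t) = Plus (subst \<sigma> s) (subst \<sigma> t)"
| "subst \<sigma> (Times s t) = Times (subst \<sigma> s) (subst \<sigma> t)"

inductive derives :: "(trm \<times> trm) set \<Rightarrow> trm \<Rightarrow> trm \<Rightarrow> bool" for \<Sigma> where
  ax: "(s, t) \<in> \<Sigma> \<Longrightarrow> derives \<Sigma> s t"
| refl: "derives \<Sigma> t t"
| sym: "derives \<Sigma> s t \<Longrightarrow> derives \<Sigma> t s"
| trans: "derives \<Sigma> s t \<Longrightarrow> derives \<Sigma> t u \<Longrightarrow> derives \<Sigma> s u"
| subst: "derives \<Sigma> s t \<Longrightarrow> derives \<Sigma> (subst \<sigma> s) (subst \<sigma> t)"
| cong_plus: "derives \<Sigma> s1 t1 \<Longrightarrow> derives \<Sigma> s2 t2 \<Longrightarrow> derives \<Sigma> (Plus s1 s2) (Plus t1 t2)"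
| cong_times: "derives \<Sigma> s1 t1 \<Longrightarrow> derives \<Sigma> s2 t2 \<Longrightarrow> derives \<Sigma> (Times s1 s2) (Times t1 t2)"

definition finitely_based :: "('a \<Rightarrow> 'a \<Rightarrow> 'a) \<Rightarrow> ('a \<Rightarrow> 'a \<Rightarrow> 'a) \<Rightarrow> bool" where
  "finitely_based pl tm \<longleftrightarrow>
     (\<exists>\<Sigma>. finite \<Sigma> \<and> \<Sigma> \<subseteq> identities pl tm \<and>
          (\<forall>e \<in> identities pl tm. derives \<Sigma> (fst e) (snd e)))"

datatype s4 = E1 | E2 | E3 | E4

fun s4_add :: "s4 \<Rightarrow> s4 \<Rightarrow> s4" where
  "s4_add E2 y = y"
| "s4_add x E2 = x"
| "s4_add E1 y = E1"
| "s4_add x E1 = E1"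
| "s4_add E3 E3 = E3"
| "s4_add E4 E4 = E4"
| "s4_add E3 E4 = E1"
| "s4_add E4 E3 = E1"

fun s4_mul :: "s4 \<Rightarrow> s4 \<Rightarrow> s4" where
  "s4_mul E1 E1 = E1" | "s4_mul E1 E2 = E2" | "s4_mul E1 E3 = E1" | "s4_mul E1 E4 = E1"
| "s4_mul E2 y = E2"
| "s4_mul E3 E1 = E1" | "s4_mul E3 E2 = E2" | "s4_mul E3 E3 = E1" | "s4_mul E3 E4 = E3"
| "s4_mul E4 E1 = E1" | "s4_mul E4 E2 = E2" | "s4_mul E4 E3 = E3" | "s4_mul E4 E4 = E4"

end

theory Submission
  imports Defs "HOL-Library.Multiset" "HOL-Library.Set_Algebras"
begin

text \<open>Multiplication in S is commutative and addition is a semilattice, so the value of a term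
in S depends only on its set of monomials, a monomial being a multiset of variables.
For odd n, S satisfies the cycle identity
x0 x1 + x1 x2 + ... + x(n-1) x0 = x0 x1 + x1 x2 + ... + x(n-1) x0 + x0 x1 ... x(n-1):
if no variable is 2 and the left side is 3, every edge product is 3, so the variables valued 3
alternate around an odd cycle. The cycle identity fails in the algebra B_n of sets of monomials
in which every set that is neither a set of vertices {i} nor a set of edges {i, i+1 mod n} of the
n-cycle collapses to an absorbing element. Yet every identity l = r of S in fewer than n variables
holds in B_n. If l evaluates to a set of edges, its monomials have degree at most 2 and its
quadratic monomials form a graph mapped into the cycle; on the variables of a monomial M of r,
which miss some vertex of the cycle, this graph is properly 2-coloured by a path, and assignments
into {2, 3, 4} built from the colouring force M to be a monomial of l. Hence l and r have the same
monomials whenever either side evaluates to a proper element of B_n.\<close>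

section \<open>Equational logic relative to a subset\<close>

definition satisfies_on :: "'a set \<Rightarrow> ('a \<Rightarrow> 'a \<Rightarrow> 'a) \<Rightarrow> ('a \<Rightarrow> 'a \<Rightarrow> 'a) \<Rightarrow> trm \<times> trm \<Rightarrow> bool" where
  "satisfies_on D pl tm e \<longleftrightarrow>
     (\<forall>\<phi>. range \<phi> \<subseteq> D \<longrightarrow> eval pl tm \<phi> (fst e) = eval pl tm \<phi> (snd e))"

lemma eval_subst: "eval pl tm \<phi> (subst \<sigma> t) = eval pl tm (\<lambda>i. eval pl tm \<phi> (\<sigma> i)) t"
  by (induction t) auto

lemma eval_closed:
  assumes "\<forall>x\<in>D. \<forall>y\<in>D. pl x y \<in> D \<and> tm x y \<in> D" and "range \<phi> \<subseteq> D"
  shows "eval pl tm \<phi> t \<in> D"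
  using assms by (induction t) auto

lemma derives_sound_on:
  assumes "derives \<Sigma> s t"
    and closed: "\<forall>x\<in>D. \<forall>y\<in>D. pl x y \<in> D \<and> tm x y \<in> D"
    and axioms: "\<forall>e\<in>\<Sigma>. satisfies_on D pl tm e"
  shows "satisfies_on D pl tm (s, t)"
  using assms(1)
proof (induction rule: derives.induct)
  case (subst s t \<sigma>)
  show ?case
    unfolding satisfies_on_def fst_conv snd_conv
  proof (intro allI impI)
    fix \<phi> :: "nat \<Rightarrow> 'a"
    assume "range \<phi> \<subseteq> D"
    then have "range (\<lambda>i. eval pl tm \<phi> (\<sigma> i)) \<subseteq> D"
      using eval_closed[OF closed] by blast
    then show "eval pl tm \<phi> (subst \<sigma> s) = eval pl tm \<phi> (subst \<sigma> t)"
      using subst.IH by (simp add: eval_subst satisfies_on_def)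
  qed
qed (use axioms in \<open>auto simp: satisfies_on_def\<close>)

fun vars :: "trm \<Rightarrow> nat set" where
  "vars (Var i) = {i}"
| "vars (Plus s t) = vars s \<union> vars t"
| "vars (Times s t) = vars s \<union> vars t"

lemma finite_vars: "finite (vars t)"
  by (induction t) auto

section \<open>Terms as sets of commutative monomials\<close>

lemma set_plus_singletons: "{a} + {b} = {a + b}"
  by (simp add: set_plus_def)

(* On sets, + is the elementwise sum of HOL-Library.Set_Algebras, which on sets of monomials
   is the product of polynomials. *)
definition poly :: "trm \<Rightarrow> nat multiset set" where
  "poly t = eval (\<union>) (+) (\<lambda>i. {{#i#}}) t"

lemma poly_simps [simp]:
  "poly (Var i) = {{#i#}}"
  "poly (Plus s t) = poly s \<union> poly t"
  "poly (Times s t) = poly s + poly t"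
  by (simp_all add: poly_def)

lemma set_mset_poly_subset_vars: "M \<in> poly t \<Longrightarrow> set_mset M \<subseteq> vars t"
  by (induction t arbitrary: M) (force elim!: set_plus_elim)+

lemma eval_union_plus_eq_Union_poly:
  fixes \<pi> :: "nat \<Rightarrow> 'a::comm_monoid_add set"
  shows "eval (\<union>) (+) \<pi> t = (\<Union>M\<in>poly t. \<Sum>x\<in>#M. \<pi> x)"
proof (induction t)
  case (Times s t)
  have "eval (\<union>) (+) \<pi> (Times s t) =
        (\<Union>M\<in>poly s. \<Sum>x\<in>#M. \<pi> x) + (\<Union>N\<in>poly t. \<Sum>x\<in>#N. \<pi> x)"
    using Times by simp
  also have "\<dots> = (\<Union>M\<in>poly s. \<Union>N\<in>poly t. \<Sum>x\<in>#M + N. \<pi> x)"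
    by (auto simp: set_plus_def)
  also have "\<dots> = (\<Union>K\<in>poly s + poly t. \<Sum>x\<in>#K. \<pi> x)"
    by (auto simp: set_plus_def simp del: image_mset_union)
  finally show ?case by simp
qed simp_all

lemma sum_mset_subset_eval_union_plus:
  "M \<in> poly t \<Longrightarrow> (\<Sum>x\<in>#M. \<pi> x) \<subseteq> eval (\<union>) (+) \<pi> t"
  by (auto simp: eval_union_plus_eq_Union_poly)

definition polys :: "'a multiset set set" where
  "polys = {P. P \<noteq> {} \<and> {#} \<notin> P}"

lemma set_plus_polys: "P \<in> polys \<Longrightarrow> Q \<in> polys \<Longrightarrow> P + Q \<in> polys"
  by (auto simp: polys_def set_plus_def)

lemma Un_polys: "P \<in> polys \<Longrightarrow> Q \<in> polys \<Longrightarrow> P \<union> Q \<in> polys"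
  by (auto simp: polys_def)

lemma eval_union_plus_polys: "range \<pi> \<subseteq> polys \<Longrightarrow> eval (\<union>) (+) \<pi> t \<in> polys"
  by (rule eval_closed) (simp_all add: Un_polys set_plus_polys)

lemma poly_polys: "poly t \<in> polys"
  unfolding poly_def by (rule eval_union_plus_polys) (auto simp: polys_def)

lemma sum_mset_polys_nonempty: "range \<pi> \<subseteq> polys \<Longrightarrow> (\<Sum>x\<in>#M. \<pi> x) \<noteq> {}"
  by (induction M) (auto simp: polys_def set_plus_def)

lemma size_le_size_of_mem_sum_mset:
  assumes "range \<pi> \<subseteq> polys" and "m \<in> (\<Sum>x\<in>#M. \<pi> x)"
  shows "size M \<le> size m"
  using assms(2)
proof (induction M arbitrary: m)
  case (add x M)
  then obtain a b where "m = a + b" "a \<in> \<pi> x" and b: "b \<in> (\<Sum>x\<in>#M. \<pi> x)"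
    by (auto elim: set_plus_elim)
  moreover have "a \<noteq> {#}" using \<open>a \<in> \<pi> x\<close> assms(1) by (auto simp: polys_def)
  ultimately show ?case using add.IH[OF b] by (simp add: Suc_le_eq nonempty_has_size)
qed simp

lemma mset_size_le_2_cases:
  assumes "size L \<le> 2" and "L \<noteq> {#}"
  obtains y where "L = {#y#}" | y z where "L = {#y, z#}"
proof -
  obtain y L' where L: "L = add_mset y L'"
    using assms(2) by (metis multiset_cases)
  show thesis
  proof (cases L' rule: multiset_cases)
    case empty
    then show ?thesis using L that(1) by simp
  next
    case (add z L'')
    then show ?thesis using L assms(1) that(2) by simp
  qed
qed

instantiation s4 :: comm_monoid_mult
begin

definition times_s4 :: "s4 \<Rightarrow> s4 \<Rightarrow> s4" where "times_s4 = s4_mul"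

definition one_s4 :: s4 where "one_s4 = E4"

instance
proof
  fix a b c :: s4
  show "a * b * c = a * (b * c)" unfolding times_s4_def
    by (cases a; cases b; cases c) auto
  show "a * b = b * a" unfolding times_s4_def by (cases a; cases b) auto
  show "1 * a = a" unfolding times_s4_def one_s4_def by (cases a) auto
qed
end

lemma s4_mul_E2_E4 [simp]: "E2 * x = E2" "x * E2 = E2" "E4 * x = x" "x * E4 = x"
  by (cases x; simp add: times_s4_def)+

lemma s4_mul_eq_E3_iff: "a * b = E3 \<longleftrightarrow> a = E3 \<and> b = E4 \<or> a = E4 \<and> b = E3"
  by (cases a; cases b) (auto simp: times_s4_def)

lemma s4_mul_eq_E4_iff: "a * b = E4 \<longleftrightarrow> a = E4 \<and> b = E4"
  by (cases a; cases b) (auto simp: times_s4_def)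

(* The join of A in the semilattice (S, +), in which 2 is neutral, 1 absorbing and 3 + 4 = 1. *)
definition s4_Sum :: "s4 set \<Rightarrow> s4" where
  "s4_Sum A = (if E1 \<in> A \<or> E3 \<in> A \<and> E4 \<in> A then E1 else if E3 \<in> A then E3
               else if E4 \<in> A then E4 else E2)"

lemma s4_Sum_singleton: "s4_Sum {x} = x"
  by (cases x) (auto simp: s4_Sum_def)

lemma s4_Sum_Un: "s4_Sum (A \<union> B) = s4_add (s4_Sum A) (s4_Sum B)"
  unfolding s4_Sum_def by auto

lemma s4_Sum_set_times:
  assumes "A \<noteq> {}" "B \<noteq> {}"
  shows "s4_Sum (A * B) = s4_Sum A * s4_Sum B"
proof -
  have ex_s4: "(\<exists>x::s4. P x) \<longleftrightarrow> P E1 \<or> P E2 \<or> P E3 \<or> P E4" for P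
    by (metis s4.exhaust)
  have "\<exists>x. x \<in> A" "\<exists>x. x \<in> B" using assms by auto
  then show ?thesis
    unfolding s4_Sum_def set_times_def mem_Collect_eq Bex_def ex_s4
    by (auto simp: times_s4_def)
qed

lemma s4_Sum_eq_E2_iff: "s4_Sum A = E2 \<longleftrightarrow> A \<subseteq> {E2}"
  unfolding s4_Sum_def by (auto; metis s4.exhaust)

lemma s4_Sum_eq_E3_iff: "s4_Sum A = E3 \<longleftrightarrow> E3 \<in> A \<and> A \<subseteq> {E2, E3}"
  unfolding s4_Sum_def by (auto; metis s4.exhaust)

lemma s4_Sum_eq_E4_iff: "s4_Sum A = E4 \<longleftrightarrow> E4 \<in> A \<and> A \<subseteq> {E2, E4}"
  unfolding s4_Sum_def by (auto; metis s4.exhaust)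

lemma eval_s4: "eval s4_add s4_mul \<psi> t = s4_Sum ((\<lambda>M. \<Prod>x\<in>#M. \<psi> x) ` poly t)"
proof (induction t)
  case (Var i)
  show ?case by (simp add: s4_Sum_singleton)
next
  case (Plus s t)
  then show ?case by (simp add: image_Un s4_Sum_Un)
next
  case (Times s t)
  let ?val = "\<lambda>M. \<Prod>x\<in>#M. \<psi> x"
  have "?val ` (poly s + poly t) = ?val ` poly s * ?val ` poly t"
    by (force simp: set_plus_def set_times_def)
  moreover have "poly s \<noteq> {}" "poly t \<noteq> {}"
    using poly_polys by (auto simp: polys_def)
  ultimately show ?case
    using Times by (simp add: s4_Sum_set_times times_s4_def[symmetric])
qed

lemma prod_mset_s4_E2:
  "x \<in># M \<Longrightarrow> \<psi> x = E2 \<Longrightarrow> (\<Prod>y\<in>#M. \<psi> y) = E2"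
  by (metis mset_add prod_mset.add_mset s4_mul_E2_E4(1) image_mset_add_mset)

lemma prod_mset_s4_neq_E2:
  "\<forall>x\<in>#M. \<psi> x \<noteq> E2 \<Longrightarrow> (\<Prod>x\<in>#M. \<psi> x) \<noteq> E2"
proof (induction M)
  case (add x M)
  then have "\<psi> x \<noteq> E2" "(\<Prod>x\<in>#M. \<psi> x) \<noteq> E2" by auto
  then show ?case by (cases "\<psi> x"; cases "\<Prod>x\<in>#M. \<psi> x") (auto simp: times_s4_def)
qed (simp add: one_s4_def)

lemma prod_mset_s4_E4: "\<forall>x\<in>#M. \<psi> x = E4 \<Longrightarrow> (\<Prod>x\<in>#M. \<psi> x) = E4"
  by (induction M) (auto simp: one_s4_def)

lemma prod_mset_s4_eq_E3_iff:
  assumes "\<forall>x\<in>#M. \<psi> x \<in> {E3, E4}"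
  shows "(\<Prod>x\<in>#M. \<psi> x) = E3 \<longleftrightarrow> size {#x \<in># M. \<psi> x = E3#} = 1"
proof -
  have "(\<Prod>x\<in>#M. \<psi> x) = (case size {#x \<in># M. \<psi> x = E3#} of 0 \<Rightarrow> E4 | Suc 0 \<Rightarrow> E3 | _ \<Rightarrow> E1)"
    using assms
  proof (induction M)
    case (add x M)
    have IH: "(\<Prod>x\<in>#M. \<psi> x) =
      (case size {#x \<in># M. \<psi> x = E3#} of 0 \<Rightarrow> E4 | Suc 0 \<Rightarrow> E3 | _ \<Rightarrow> E1)"
      using add by simp
    have "\<psi> x = E3 \<or> \<psi> x = E4" using add.prems by simp
    then show ?case by (elim disjE) (auto simp: IH times_s4_def split: nat.split dest!: size_eq_Suc_imp_elem)
  qed (simp add: one_s4_def)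
  then show ?thesis by (auto split: nat.split dest!: size_eq_Suc_imp_elem)
qed

lemma s4_identity_Sum_eq:
  assumes "satisfies s4_add s4_mul (l, r)"
  shows "s4_Sum ((\<lambda>M. \<Prod>x\<in>#M. \<psi> x) ` poly l) = s4_Sum ((\<lambda>M. \<Prod>x\<in>#M. \<psi> x) ` poly r)"
  using assms by (simp add: satisfies_def eval_s4)

lemma s4_identity_support:
  assumes "satisfies s4_add s4_mul (l, r)" and "M \<in> poly r"
  shows "\<exists>L\<in>poly l. set_mset L \<subseteq> set_mset M"
proof -
  define \<psi> where "\<psi> x = (if x \<in># M then E4 else E2)" for x
  have "(\<Prod>x\<in>#M. \<psi> x) = E4"
    by (rule prod_mset_s4_E4) (simp add: \<psi>_def)
  then have "s4_Sum ((\<lambda>M. \<Prod>x\<in>#M. \<psi> x) ` poly r) \<noteq> E2"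
    using assms(2) by (force simp: s4_Sum_eq_E2_iff)
  then have "s4_Sum ((\<lambda>M. \<Prod>x\<in>#M. \<psi> x) ` poly l) \<noteq> E2"
    using s4_identity_Sum_eq[OF assms(1)] by simp
  then obtain L where L: "L \<in> poly l" "(\<Prod>x\<in>#L. \<psi> x) \<noteq> E2"
    by (auto simp: s4_Sum_eq_E2_iff)
  have "x \<in># M" if "x \<in># L" for x
  proof (rule ccontr)
    assume "x \<notin># M"
    then show False using prod_mset_s4_E2[OF that, of \<psi>] L(2) by (simp add: \<psi>_def)
  qed
  with L(1) show ?thesis by blast
qed

lemma s4_identity_monomial_E3:
  assumes "satisfies s4_add s4_mul (l, r)"
    and "\<forall>L\<in>poly l. (\<Prod>x\<in>#L. \<psi> x) \<in> {E2, E3}"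
    and "M \<in> poly r" and "\<forall>x\<in>#M. \<psi> x \<noteq> E2"
  shows "(\<Prod>x\<in>#M. \<psi> x) = E3"
proof -
  let ?vals = "\<lambda>t. (\<lambda>M. \<Prod>x\<in>#M. \<psi> x) ` poly t"
  have M: "(\<Prod>x\<in>#M. \<psi> x) \<in> ?vals r" "(\<Prod>x\<in>#M. \<psi> x) \<noteq> E2"
    using assms(3,4) prod_mset_s4_neq_E2 by auto
  have "s4_Sum (?vals l) \<in> {E2, E3}"
    using assms(2) unfolding s4_Sum_def by auto
  then have "s4_Sum (?vals r) = E3"
    using M s4_identity_Sum_eq[OF assms(1)] by (auto simp: s4_Sum_eq_E2_iff)
  then show ?thesis
    using M by (auto simp: s4_Sum_eq_E3_iff)
qed

context
  fixes l r :: trm and M :: "nat multiset" and col :: "nat \<Rightarrow> bool"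
  assumes sat: "satisfies s4_add s4_mul (l, r)"
    and deg: "\<forall>L\<in>poly l. size L \<le> 2"
    and quad: "\<forall>y z. {#y, z#} \<in> poly l \<longrightarrow> y \<noteq> z \<and> {#y#} \<notin> poly l"
    and M: "M \<in> poly r"
    and col: "\<forall>y z. {#y, z#} \<in> poly l \<longrightarrow> y \<in># M \<longrightarrow> z \<in># M \<longrightarrow> col y \<noteq> col z"
begin

lemma s4_identity_colouring_count: "size {#z \<in># M. {#z#} \<in> poly l \<or> col z = c#} = 1"
proof -
  define \<psi> where
    "\<psi> z = (if z \<notin># M then E2 else if {#z#} \<in> poly l \<or> col z = c then E3 else E4)" for z
  have "(\<Prod>x\<in>#L. \<psi> x) \<in> {E2, E3}" if L: "L \<in> poly l" for L
  proof (cases "set_mset L \<subseteq> set_mset M")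
    case False
    then obtain x where "x \<in># L" "x \<notin># M" by blast
    then show ?thesis using prod_mset_s4_E2[of x L \<psi>] by (simp add: \<psi>_def)
  next
    case True
    have "size L \<le> 2" "L \<noteq> {#}"
      using L deg poly_polys[of l] by (auto simp: polys_def)
    then show ?thesis
    proof (cases rule: mset_size_le_2_cases)
      case (1 y)
      then show ?thesis using L True by (simp add: \<psi>_def)
    next
      case (2 y z)
      have yz: "{#y, z#} \<in> poly l" "{#z, y#} \<in> poly l"
        using L 2 by (simp_all add: add_mset_commute)
      have "y \<in># M" "z \<in># M"
        using True 2 by auto
      then have "{#y#} \<notin> poly l" "{#z#} \<notin> poly l" "col y \<noteq> col z"
        using yz quad col by blast+
      then show ?thesis
        using 2 True by (cases c; cases "col y") (auto simp: \<psi>_def times_s4_def one_s4_def)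
    qed
  qed
  then have "(\<Prod>x\<in>#M. \<psi> x) = E3"
    using s4_identity_monomial_E3[OF sat _ M] by (simp add: \<psi>_def)
  moreover have "{#x \<in># M. \<psi> x = E3#} = {#z \<in># M. {#z#} \<in> poly l \<or> col z = c#}"
    by (rule filter_mset_cong) (auto simp: \<psi>_def)
  ultimately show ?thesis
    using prod_mset_s4_eq_E3_iff[of M \<psi>] by (simp add: \<psi>_def)
qed

lemma s4_identity_quadratic: "M \<in> poly l"
proof -
  let ?F = "\<lambda>c. {#z \<in># M. {#z#} \<in> poly l \<or> col z = c#}"
  have F: "?F c = {#x#}" if "x \<in># ?F c" for x c
  proof -
    obtain a where "?F c = {#a#}"
      using s4_identity_colouring_count[of c] by (metis size_1_singleton_mset)
    with that show ?thesis by simp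
  qed
  have count_M: "count M x = count (?F (col x)) x" for x
    by simp
  obtain L where L: "L \<in> poly l" "set_mset L \<subseteq> set_mset M"
    using s4_identity_support[OF sat M] by blast
  have "size L \<le> 2" "L \<noteq> {#}"
    using L deg poly_polys[of l] by (auto simp: polys_def)
  then show ?thesis
  proof (cases rule: mset_size_le_2_cases)
    case (1 y)
    then have "y \<in># ?F c" for c
      using L by simp
    then have Fy: "?F c = {#y#}" for c
      by (rule F)
    have "M = {#y#}"
      by (rule multiset_eqI) (rule count_M[unfolded Fy])
    then show ?thesis using L 1 by simp
  next
    case (2 y z)
    have "y \<in># M" "z \<in># M"
      using L 2 by auto
    then have "y \<noteq> z" "col y \<noteq> col z"
      using L 2 quad col by blast+
    then have "?F (col y) = {#y#}" "?F (col z) = {#z#}"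
      using \<open>y \<in># M\<close> \<open>z \<in># M\<close> by (simp_all add: F)
    then have Fx: "?F (col x) = (if col x = col y then {#y#} else {#z#})" for x
      using \<open>col y \<noteq> col z\<close> by (cases "col x"; cases "col y") auto
    have "count M x = count {#y, z#} x" for x
      using count_M[of x, unfolded Fx] \<open>y \<noteq> z\<close> \<open>col y \<noteq> col z\<close> by auto
    then have "M = {#y, z#}"
      by (rule multiset_eqI)
    then show ?thesis using L 2 by simp
  qed
qed

end

section \<open>The cycle identities\<close>

definition cycle_edges :: "nat \<Rightarrow> nat multiset set" where
  "cycle_edges n = (\<lambda>i. {#i, Suc i mod n#}) ` {..<n}"

definition cycle_vertices :: "nat \<Rightarrow> nat multiset set" where
  "cycle_vertices n = (\<lambda>i. {#i#}) ` {..<n}"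

lemma size_cycle_edges: "m \<in> cycle_edges n \<Longrightarrow> size m = 2"
  by (auto simp: cycle_edges_def)

lemma size_cycle_vertices: "m \<in> cycle_vertices n \<Longrightarrow> size m = 1"
  by (auto simp: cycle_vertices_def)

lemma loop_notin_cycle_edges:
  assumes "2 \<le> n"
  shows "{#i, i#} \<notin> cycle_edges n"
proof
  assume "{#i, i#} \<in> cycle_edges n"
  then obtain a where "a < n" "{#i, i#} = {#a, Suc a mod n#}"
    by (auto simp: cycle_edges_def)
  then have "a < n" "Suc a mod n = a"
    by (auto simp: add_eq_conv_diff)
  then show False
    using assms by (auto simp: mod_Suc split: if_split_asm)
qed

definition forward_dist :: "nat \<Rightarrow> nat \<Rightarrow> nat \<Rightarrow> nat" where
  "forward_dist n j i = (if j \<le> i then i - j else i + n - j)"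

(* Without the vertex j the cycle is a path, properly coloured by the parity of the distance
   from j. *)
lemma cycle_edge_forward_dist_parity:
  assumes "{#i, k#} \<in> cycle_edges n" "j < n" "i \<noteq> j" "k \<noteq> j"
  shows "even (forward_dist n j i) \<noteq> even (forward_dist n j k)"
proof -
  have *: "even (forward_dist n j a) \<noteq> even (forward_dist n j (Suc a mod n))"
    if "a < n" "a \<noteq> j" "Suc a mod n \<noteq> j" for a
  proof (cases "Suc a < n")
    case True
    then show ?thesis using that \<open>j < n\<close> by (auto simp: forward_dist_def)
  next
    case False
    then have "Suc a = n" using that(1) by simp
    then show ?thesis using that \<open>j < n\<close> by (auto simp: forward_dist_def)
  qed
  obtain a where "a < n" "{#i, k#} = {#a, Suc a mod n#}"
    using assms(1) by (auto simp: cycle_edges_def)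
  then have "a < n \<and> (i = a \<and> k = Suc a mod n \<or> i = Suc a mod n \<and> k = a)"
    by (auto simp: add_eq_conv_diff)
  then show ?thesis using * assms(3,4) by metis
qed

lemma odd_cycle_not_alternating:
  assumes "odd n"
  shows "\<not> (\<forall>i<n. P (Suc i mod n) \<longleftrightarrow> \<not> P i)"
proof
  assume alt: "\<forall>i<n. P (Suc i mod n) \<longleftrightarrow> \<not> P i"
  have "P i \<longleftrightarrow> (P 0 \<longleftrightarrow> even i)" if "i < n" for i
    using that
  proof (induction i)
    case (Suc i)
    then have "i < n" "Suc i mod n = Suc i"
      by simp_all
    then have "P (Suc i) \<longleftrightarrow> \<not> P i"
      using alt by metis
    moreover have "P i \<longleftrightarrow> (P 0 \<longleftrightarrow> even i)"
      using Suc.IH \<open>i < n\<close> by blast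
    ultimately show ?case
      by simp
  qed simp
  moreover have "n - 1 < n" "even (n - 1)" "Suc (n - 1) mod n = 0"
    using assms by (simp_all add: odd_pos)
  ultimately show False
    using alt by metis
qed

definition cycle_sum :: "nat \<Rightarrow> trm" where
  "cycle_sum n = foldr (\<lambda>i. Plus (Times (Var i) (Var (Suc i mod n)))) [1..<n]
                   (Times (Var 0) (Var (1 mod n)))"

definition var_prod :: "nat \<Rightarrow> trm" where
  "var_prod n = foldr (\<lambda>i. Times (Var i)) [1..<n] (Var 0)"

lemma poly_cycle_sum: "0 < n \<Longrightarrow> poly (cycle_sum n) = cycle_edges n"
proof -
  have "poly (foldr (\<lambda>i. Plus (Times (Var i) (Var (Suc i mod n)))) xs t) =
        (\<lambda>i. {#i, Suc i mod n#}) ` set xs \<union> poly t" for xs t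
    by (induction xs) (simp_all add: set_plus_singletons add_mset_commute)
  moreover assume "0 < n"
  then have "{..<n} = insert 0 (set [1..<n])"
    by auto
  ultimately show ?thesis
    by (simp add: cycle_sum_def cycle_edges_def set_plus_singletons add_mset_commute)
qed

lemma poly_var_prod: "0 < n \<Longrightarrow> poly (var_prod n) = {mset [0..<n]}"
proof -
  have "poly (foldr (\<lambda>i. Times (Var i)) xs t) = {mset xs} + poly t" for xs t
    by (induction xs) (simp_all add: set_plus_singletons add.assoc[symmetric])
  moreover assume "0 < n"
  then have "mset [0..<n] = mset [1..<n] + {#0#}"
    by (simp add: upt_conv_Cons)
  ultimately show ?thesis
    by (simp add: var_prod_def set_plus_singletons)
qed

lemma s4_satisfies_cycle_identity:
  assumes "odd n"
  shows "satisfies s4_add s4_mul (cycle_sum n, Plus (cycle_sum n) (var_prod n))"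
  unfolding satisfies_def fst_conv snd_conv eval.simps
proof
  fix \<psi> :: "nat \<Rightarrow> s4"
  have "0 < n"
    using assms by (simp add: odd_pos)
  define e where "e i = \<psi> i * \<psi> (Suc i mod n)" for i
  define x where "x = s4_Sum (e ` {..<n})"
  define y where "y = (\<Prod>i\<in>#mset [0..<n]. \<psi> i)"
  have "(\<lambda>M. \<Prod>i\<in>#M. \<psi> i) ` cycle_edges n = e ` {..<n}"
    by (simp add: cycle_edges_def e_def image_image)
  then have ex: "eval s4_add s4_mul \<psi> (cycle_sum n) = x"
    by (simp add: eval_s4 poly_cycle_sum[OF \<open>0 < n\<close>] x_def)
  have ey: "eval s4_add s4_mul \<psi> (var_prod n) = y"
    by (simp add: eval_s4 poly_var_prod[OF \<open>0 < n\<close>] s4_Sum_singleton y_def)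
  show "eval s4_add s4_mul \<psi> (cycle_sum n) =
        s4_add (eval s4_add s4_mul \<psi> (cycle_sum n)) (eval s4_add s4_mul \<psi> (var_prod n))"
    unfolding ex ey
  proof (cases "\<exists>i<n. \<psi> i = E2")
    case True
    then have "y = E2"
      unfolding y_def by (auto intro: prod_mset_s4_E2)
    then show "x = s4_add x y"
      by (cases x) auto
  next
    case False
    then have e_ne: "e i \<noteq> E2" if "i < n" for i
      using that \<open>0 < n\<close> by (cases "\<psi> i"; cases "\<psi> (Suc i mod n)") (auto simp: e_def times_s4_def)
    then have "x \<noteq> E2"
      using \<open>0 < n\<close> by (auto simp: x_def s4_Sum_eq_E2_iff)
    then consider "x = E1" | "x = E3" | "x = E4"
      by (cases x) auto
    then show "x = s4_add x y"
    proof cases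
      case 1
      then show ?thesis by (cases y) simp_all
    next
      case 2
      then have e3: "e i = E3" if "i < n" for i
        using that e_ne by (auto simp: x_def s4_Sum_eq_E3_iff)
      have "\<psi> (Suc i mod n) = E3 \<longleftrightarrow> \<not> \<psi> i = E3" if "i < n" for i
        using e3[OF that] by (auto simp: e_def s4_mul_eq_E3_iff)
      then have False
        using odd_cycle_not_alternating[OF assms, of "\<lambda>i. \<psi> i = E3"] by blast
      then show ?thesis ..
    next
      case 3
      then have "e i = E4" if "i < n" for i
        using that e_ne by (auto simp: x_def s4_Sum_eq_E4_iff)
      then have "\<psi> i = E4" if "i < n" for i
        using that by (simp add: e_def s4_mul_eq_E4_iff)
      then have "y = E4"
        unfolding y_def by (intro prod_mset_s4_E4) simp
      with 3 show ?thesis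
        by simp
    qed
  qed
qed

section \<open>The truncated algebra B_n\<close>

(* B_n has carrier trunc_carrier n. Every polynomial that is neither a set of vertices nor a set
   of edges of the n-cycle collapses to the absorbing element None. *)
definition trunc :: "nat \<Rightarrow> nat multiset set \<Rightarrow> nat multiset set option" where
  "trunc n P = (if P \<subseteq> cycle_edges n \<or> P \<subseteq> cycle_vertices n then Some P else None)"

definition trunc_add ::
  "nat \<Rightarrow> nat multiset set option \<Rightarrow> nat multiset set option \<Rightarrow> nat multiset set option" where
  "trunc_add n x y = (case (x, y) of (Some P, Some Q) \<Rightarrow> trunc n (P \<union> Q) | _ \<Rightarrow> None)"

definition trunc_mul ::
  "nat \<Rightarrow> nat multiset set option \<Rightarrow> nat multiset set option \<Rightarrow> nat multiset set option" where
  "trunc_mul n x y = (case (x, y) of (Some P, Some Q) \<Rightarrow> trunc n (P + Q) | _ \<Rightarrow> None)"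

definition trunc_carrier :: "nat \<Rightarrow> nat multiset set option set" where
  "trunc_carrier n = trunc n ` polys"

lemma trunc_Un: "trunc n (P \<union> Q) = trunc_add n (trunc n P) (trunc n Q)"
  by (auto simp: trunc_def trunc_add_def)

lemma set_plus_subset_cycle_edges_imp:
  assumes "P \<in> polys" "Q \<in> polys" "P + Q \<subseteq> cycle_edges n"
  shows "P \<subseteq> cycle_vertices n"
proof
  fix a assume "a \<in> P"
  obtain b where "b \<in> Q" using assms(2) by (auto simp: polys_def)
  then have ab: "a + b \<in> cycle_edges n"
    using \<open>a \<in> P\<close> assms(3) by blast
  then obtain i where "i < n" and i: "a + b = {#i, Suc i mod n#}"
    by (auto simp: cycle_edges_def)
  have "size a + size b = 2" "a \<noteq> {#}" "b \<noteq> {#}"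
    using size_cycle_edges[OF ab] \<open>a \<in> P\<close> \<open>b \<in> Q\<close> assms(1,2) by (auto simp: polys_def)
  then have "size a = 1"
    by (simp add: nonempty_has_size)
  then obtain x where x: "a = {#x#}"
    using size_1_singleton_mset by blast
  then have "x \<in># a + b"
    by simp
  then have "x = i \<or> x = Suc i mod n"
    by (simp add: i)
  then show "a \<in> cycle_vertices n"
    using \<open>i < n\<close> x by (auto simp: cycle_vertices_def)
qed

lemma trunc_set_plus:
  assumes "P \<in> polys" "Q \<in> polys"
  shows "trunc n (P + Q) = trunc_mul n (trunc n P) (trunc n Q)"
proof -
  have "\<not> P + Q \<subseteq> cycle_vertices n"
  proof
    assume "P + Q \<subseteq> cycle_vertices n"
    moreover obtain a b where "a \<in> P" "b \<in> Q" "a \<noteq> {#}" "b \<noteq> {#}"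
      using assms by (auto simp: polys_def)
    ultimately have "size (a + b) = 1"
      using size_cycle_vertices by blast
    with \<open>a \<noteq> {#}\<close> \<open>b \<noteq> {#}\<close> show False
      by (simp add: nonempty_has_size)
  qed
  moreover have "P + Q \<subseteq> cycle_edges n \<Longrightarrow> P \<subseteq> cycle_vertices n \<and> Q \<subseteq> cycle_vertices n"
    using set_plus_subset_cycle_edges_imp[OF assms] set_plus_subset_cycle_edges_imp[OF assms(2,1)]
    by (simp add: add.commute)
  ultimately show ?thesis
    by (auto simp: trunc_def trunc_mul_def)
qed

lemma eval_trunc:
  assumes "range \<pi> \<subseteq> polys"
  shows "eval (trunc_add n) (trunc_mul n) (\<lambda>i. trunc n (\<pi> i)) t = trunc n (eval (\<union>) (+) \<pi> t)"
proof (induction t)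
  case (Times s t)
  then show ?case
    using eval_union_plus_polys[OF assms] by (simp add: trunc_set_plus)
qed (simp_all add: trunc_Un)

lemma trunc_carrier_closed:
  "\<forall>x\<in>trunc_carrier n. \<forall>y\<in>trunc_carrier n. trunc_add n x y \<in> trunc_carrier n \<and> trunc_mul n x y \<in> trunc_carrier n"
proof (intro ballI)
  fix x y
  assume "x \<in> trunc_carrier n" "y \<in> trunc_carrier n"
  then obtain P Q where "P \<in> polys" "Q \<in> polys" "x = trunc n P" "y = trunc n Q"
    by (auto simp: trunc_carrier_def)
  then show "trunc_add n x y \<in> trunc_carrier n \<and> trunc_mul n x y \<in> trunc_carrier n"
    by (simp add: trunc_carrier_def trunc_Un[symmetric] trunc_set_plus[symmetric] Un_polys set_plus_polys)
qed

lemma trunc_algebra_refutes_cycle_identity: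
  assumes "3 \<le> n"
  shows "\<not> satisfies_on (trunc_carrier n) (trunc_add n) (trunc_mul n)
            (cycle_sum n, Plus (cycle_sum n) (var_prod n))"
proof
  assume sat: "satisfies_on (trunc_carrier n) (trunc_add n) (trunc_mul n)
                 (cycle_sum n, Plus (cycle_sum n) (var_prod n))"
  have singleton_polys: "{{#i#}} \<in> polys" for i :: nat
    by (simp add: polys_def)
  then have \<pi>: "range (\<lambda>i::nat. {{#i#}}) \<subseteq> polys"
    by auto
  have "range (\<lambda>i. trunc n {{#i#}}) \<subseteq> trunc_carrier n"
    using singleton_polys by (auto simp: trunc_carrier_def)
  from sat[unfolded satisfies_on_def, rule_format, OF this]
  have "trunc n (poly (cycle_sum n)) = trunc n (poly (Plus (cycle_sum n) (var_prod n)))"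
    by (simp only: fst_conv snd_conv eval_trunc[OF \<pi>] poly_def)
  moreover have "0 < n"
    using assms by simp
  then have "trunc n (poly (cycle_sum n)) = Some (cycle_edges n)"
    by (simp add: poly_cycle_sum trunc_def)
  moreover have "size (mset [0..<n]) \<noteq> 2" "size (mset [0..<n]) \<noteq> 1"
    using assms by simp_all
  then have "mset [0..<n] \<notin> cycle_edges n \<union> cycle_vertices n"
    using size_cycle_edges size_cycle_vertices by blast
  then have "trunc n (poly (Plus (cycle_sum n) (var_prod n))) = None"
    using \<open>0 < n\<close> by (auto simp: poly_cycle_sum poly_var_prod trunc_def)
  ultimately show False
    by simp
qed

lemma truncated_poly_degree_le_2:
  assumes "range \<pi> \<subseteq> polys"
    and "eval (\<union>) (+) \<pi> l \<subseteq> cycle_edges n \<or> eval (\<union>) (+) \<pi> l \<subseteq> cycle_vertices n"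
    and "L \<in> poly l"
  shows "size L \<le> 2"
proof -
  obtain m where m: "m \<in> (\<Sum>x\<in>#L. \<pi> x)"
    using sum_mset_polys_nonempty[OF assms(1)] by blast
  then have "m \<in> eval (\<union>) (+) \<pi> l"
    using sum_mset_subset_eval_union_plus[OF assms(3)] by blast
  then have "size m \<le> 2"
    using assms(2) size_cycle_edges size_cycle_vertices by fastforce
  then show ?thesis
    using size_le_size_of_mem_sum_mset[OF assms(1) m] by simp
qed

lemma truncated_poly_quadratic_monomial:
  assumes \<pi>: "range \<pi> \<subseteq> polys"
    and small: "eval (\<union>) (+) \<pi> l \<subseteq> cycle_edges n \<or> eval (\<union>) (+) \<pi> l \<subseteq> cycle_vertices n"
    and yz: "{#y, z#} \<in> poly l"
  shows "eval (\<union>) (+) \<pi> l \<subseteq> cycle_edges n" and "\<pi> y + \<pi> z \<subseteq> cycle_edges n"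
    and "\<pi> y \<subseteq> cycle_vertices n"
proof -
  have sub: "\<pi> y + \<pi> z \<subseteq> eval (\<union>) (+) \<pi> l"
    using sum_mset_subset_eval_union_plus[OF yz, of \<pi>] by simp
  obtain m where m: "m \<in> (\<Sum>x\<in>#{#y, z#}. \<pi> x)"
    using sum_mset_polys_nonempty[OF \<pi>] by blast
  then have "2 \<le> size m"
    using size_le_size_of_mem_sum_mset[OF \<pi> m] by simp
  moreover have "m \<in> eval (\<union>) (+) \<pi> l"
    using m sub by (simp add: subset_iff)
  ultimately show edges: "eval (\<union>) (+) \<pi> l \<subseteq> cycle_edges n"
    using small size_cycle_vertices by fastforce
  with sub show "\<pi> y + \<pi> z \<subseteq> cycle_edges n"
    by blast
  moreover have "\<pi> y \<in> polys" "\<pi> z \<in> polys"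
    using \<pi> by auto
  ultimately show "\<pi> y \<subseteq> cycle_vertices n"
    by (rule set_plus_subset_cycle_edges_imp[rotated 2])
qed

lemma truncated_poly_quadratic_squarefree_nonlinear:
  assumes \<pi>: "range \<pi> \<subseteq> polys"
    and small: "eval (\<union>) (+) \<pi> l \<subseteq> cycle_edges n \<or> eval (\<union>) (+) \<pi> l \<subseteq> cycle_vertices n"
    and "2 \<le> n" and yz: "{#y, z#} \<in> poly l"
  shows "y \<noteq> z" and "{#y#} \<notin> poly l"
proof -
  note edges = truncated_poly_quadratic_monomial[OF \<pi> small yz]
  obtain a where "a \<in> \<pi> y"
    using \<pi> by (auto simp: polys_def)
  then obtain i where i: "{#i#} \<in> \<pi> y"
    using edges(3) by (auto simp: cycle_vertices_def)
  show "y \<noteq> z"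
  proof
    assume "y = z"
    then have "{#i#} + {#i#} \<in> cycle_edges n"
      using i edges(2) by blast
    then show False
      using loop_notin_cycle_edges[OF \<open>2 \<le> n\<close>] by simp
  qed
  show "{#y#} \<notin> poly l"
  proof
    assume "{#y#} \<in> poly l"
    then have "\<pi> y \<subseteq> cycle_edges n"
      using sum_mset_subset_eval_union_plus[of "{#y#}" l \<pi>] edges(1) by simp
    then show False
      using i size_cycle_edges by fastforce
  qed
qed

lemma s4_identity_truncated_poly_subset:
  assumes sat: "satisfies s4_add s4_mul (l, r)"
    and "card (vars r) < n" "2 \<le> n" and \<pi>: "range \<pi> \<subseteq> polys"
    and small: "eval (\<union>) (+) \<pi> l \<subseteq> cycle_edges n \<or> eval (\<union>) (+) \<pi> l \<subseteq> cycle_vertices n"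
  shows "poly r \<subseteq> poly l"
proof
  fix M assume M: "M \<in> poly r"
  define rep where "rep y = (SOME i. {#i#} \<in> \<pi> y)" for y
  have rep: "{#rep y#} \<in> \<pi> y" if "{#y, z#} \<in> poly l" for y z
  proof -
    obtain a where "a \<in> \<pi> y"
      using \<pi> by (auto simp: polys_def)
    then show ?thesis
      using truncated_poly_quadratic_monomial(3)[OF \<pi> small that]
      unfolding rep_def cycle_vertices_def by (auto intro: someI)
  qed
  have edge: "{#rep y, rep z#} \<in> cycle_edges n" if "{#y, z#} \<in> poly l" for y z
  proof -
    have "{#z, y#} \<in> poly l"
      using that by (simp add: add_mset_commute)
    then have "{#rep y#} + {#rep z#} \<in> cycle_edges n"
      using rep that truncated_poly_quadratic_monomial(2)[OF \<pi> small that] by blast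
    then show ?thesis
      by (simp add: add_mset_commute)
  qed
  have "card (rep ` set_mset M) < card {..<n}"
    using card_image_le[of "set_mset M" rep] card_mono[OF finite_vars set_mset_poly_subset_vars[OF M]]
      \<open>card (vars r) < n\<close> by simp
  then have "\<not> {..<n} \<subseteq> rep ` set_mset M"
    by (meson card_mono finite_imageI finite_set_mset leD)
  then obtain j where j: "j < n" "j \<notin> rep ` set_mset M"
    by blast
  show "M \<in> poly l"
  proof (rule s4_identity_quadratic[OF sat _ _ M])
    show "\<forall>L\<in>poly l. size L \<le> 2"
      using truncated_poly_degree_le_2[OF \<pi> small] by blast
    show "\<forall>y z. {#y, z#} \<in> poly l \<longrightarrow> y \<noteq> z \<and> {#y#} \<notin> poly l"
      using truncated_poly_quadratic_squarefree_nonlinear[OF \<pi> small \<open>2 \<le> n\<close>] by blast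
    show "\<forall>y z. {#y, z#} \<in> poly l \<longrightarrow> y \<in># M \<longrightarrow> z \<in># M \<longrightarrow>
        even (forward_dist n j (rep y)) \<noteq> even (forward_dist n j (rep z))"
    proof (intro allI impI)
      fix y z
      assume "{#y, z#} \<in> poly l" "y \<in># M" "z \<in># M"
      then show "even (forward_dist n j (rep y)) \<noteq> even (forward_dist n j (rep z))"
        using edge j by (intro cycle_edge_forward_dist_parity) auto
    qed
  qed
qed

lemma s4_identity_truncated_eval_eq:
  assumes sat: "satisfies s4_add s4_mul (l, r)"
    and "card (vars l) < n" "card (vars r) < n" "2 \<le> n" and \<pi>: "range \<pi> \<subseteq> polys"
  shows "trunc n (eval (\<union>) (+) \<pi> l) = trunc n (eval (\<union>) (+) \<pi> r)"
proof -
  have *: "poly l' = poly r'"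
    if "satisfies s4_add s4_mul (l', r')" "card (vars l') < n" "card (vars r') < n"
      and "trunc n (eval (\<union>) (+) \<pi> l') \<noteq> None" for l' r'
  proof -
    have sat': "satisfies s4_add s4_mul (r', l')"
      using that(1) by (simp add: satisfies_def)
    have small: "eval (\<union>) (+) \<pi> l' \<subseteq> cycle_edges n \<or> eval (\<union>) (+) \<pi> l' \<subseteq> cycle_vertices n"
      using that(4) by (simp add: trunc_def split: if_splits)
    have "poly r' \<subseteq> poly l'"
      using s4_identity_truncated_poly_subset[OF that(1,3) \<open>2 \<le> n\<close> \<pi> small] .
    then have "eval (\<union>) (+) \<pi> r' \<subseteq> eval (\<union>) (+) \<pi> l'"
      by (auto simp: eval_union_plus_eq_Union_poly)
    with small have "poly l' \<subseteq> poly r'"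
      using s4_identity_truncated_poly_subset[OF sat' that(2) \<open>2 \<le> n\<close> \<pi>] by blast
    with \<open>poly r' \<subseteq> poly l'\<close> show ?thesis
      by blast
  qed
  have sat': "satisfies s4_add s4_mul (r, l)"
    using sat by (simp add: satisfies_def)
  show ?thesis
  proof (cases "trunc n (eval (\<union>) (+) \<pi> l) = None \<and> trunc n (eval (\<union>) (+) \<pi> r) = None")
    case False
    then have "poly l = poly r"
      using *[OF sat assms(2,3)] *[OF sat' assms(3,2)] by auto
    then show ?thesis
      by (simp add: eval_union_plus_eq_Union_poly)
  qed simp
qed

lemma trunc_algebra_satisfies_s4_identity:
  assumes "satisfies s4_add s4_mul (l, r)" "card (vars l) < n" "card (vars r) < n" "2 \<le> n"
  shows "satisfies_on (trunc_carrier n) (trunc_add n) (trunc_mul n) (l, r)"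
  unfolding satisfies_on_def
proof (intro allI impI)
  fix \<phi> :: "nat \<Rightarrow> nat multiset set option"
  assume "range \<phi> \<subseteq> trunc_carrier n"
  then have "\<forall>i. \<exists>P. P \<in> polys \<and> \<phi> i = trunc n P"
    by (auto simp: trunc_carrier_def)
  then obtain \<pi> where "\<forall>i. \<pi> i \<in> polys \<and> \<phi> i = trunc n (\<pi> i)"
    by metis
  then have \<pi>: "range \<pi> \<subseteq> polys" and "\<phi> = (\<lambda>i. trunc n (\<pi> i))"
    by auto
  then show "eval (trunc_add n) (trunc_mul n) \<phi> (fst (l, r)) =
             eval (trunc_add n) (trunc_mul n) \<phi> (snd (l, r))"
    using s4_identity_truncated_eval_eq[OF assms \<pi>] by (simp add: eval_trunc)
qed

lemma trunc_algebra_satisfies_finite_s4_identities: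
  assumes fin: "finite \<Sigma>" and sub: "\<Sigma> \<subseteq> identities s4_add s4_mul"
  obtains n where "odd n" "3 \<le> n"
    and "\<forall>e\<in>\<Sigma>. satisfies_on (trunc_carrier n) (trunc_add n) (trunc_mul n) e"
proof -
  define n where "n = 2 * (\<Sum>(l, r)\<in>\<Sigma>. card (vars l) + card (vars r)) + 3"
  have "\<forall>e\<in>\<Sigma>. satisfies_on (trunc_carrier n) (trunc_add n) (trunc_mul n) e"
  proof
    fix e assume "e \<in> \<Sigma>"
    obtain l r where lr: "e = (l, r)"
      by (cases e)
    have "card (vars l) + card (vars r) \<le> (\<Sum>(l, r)\<in>\<Sigma>. card (vars l) + card (vars r))"
      using member_le_sum[OF \<open>e \<in> \<Sigma>\<close> _ fin, of "\<lambda>(l, r). card (vars l) + card (vars r)"] lr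
      by simp
    then have "card (vars l) < n" "card (vars r) < n" "2 \<le> n"
      by (simp_all add: n_def)
    moreover have "satisfies s4_add s4_mul (l, r)"
      using sub \<open>e \<in> \<Sigma>\<close> lr by (auto simp: identities_def)
    ultimately show "satisfies_on (trunc_carrier n) (trunc_add n) (trunc_mul n) e"
      unfolding lr using trunc_algebra_satisfies_s4_identity by blast
  qed
  moreover have "odd n" "3 \<le> n"
    by (simp_all add: n_def)
  ultimately show thesis
    using that by blast
qed

theorem proposition2p1:
  shows "\<not> finitely_based s4_add s4_mul"
proof
  assume "finitely_based s4_add s4_mul"
  then obtain \<Sigma> where fin: "finite \<Sigma>" and sub: "\<Sigma> \<subseteq> identities s4_add s4_mul"
    and der: "\<forall>e\<in>identities s4_add s4_mul. derives \<Sigma> (fst e) (snd e)"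
    unfolding finitely_based_def by blast
  obtain n where "odd n" "3 \<le> n"
    and axioms: "\<forall>e\<in>\<Sigma>. satisfies_on (trunc_carrier n) (trunc_add n) (trunc_mul n) e"
    using trunc_algebra_satisfies_finite_s4_identities[OF fin sub] by blast
  have "(cycle_sum n, Plus (cycle_sum n) (var_prod n)) \<in> identities s4_add s4_mul"
    using s4_satisfies_cycle_identity[OF \<open>odd n\<close>] by (simp add: identities_def)
  then have "derives \<Sigma> (cycle_sum n) (Plus (cycle_sum n) (var_prod n))"
    using der by fastforce
  then have "satisfies_on (trunc_carrier n) (trunc_add n) (trunc_mul n)
               (cycle_sum n, Plus (cycle_sum n) (var_prod n))"
    by (rule derives_sound_on[OF _ trunc_carrier_closed axioms])
  with trunc_algebra_refutes_cycle_identity[OF \<open>3 \<le> n\<close>] show False ..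
qed

end
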